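(* Let $m,n\geq 6$ and $r\geq 3$. Then $\rho(\mathcal{P}^r_{m-5}\cup\mathcal{W}_{n-1})=\rho(\mathcal{P}^r_{n-5}\cup\mathcal{W}_{m-1})$ and $ME(\mathcal{P}^r_{m-5}\cup\mathcal{W}_{n-1})=ME(\mathcal{P}^r_{n-5}\cup\mathcal{W}_{m-1})$.
   Context: The loose path $\mathcal{P}^r_t=v_1e_1v_2\cdots v_te_tv_{t+1}$ of length $t\geq 1$ has edges $e_i=\{v_i,u_{i,1},\dots,u_{i,r-2},v_{i+1}\}$, all listed vertices distinct. For $N\geq 5$, $\mathcal{W}_N$ is obtained from $\mathcal{P}^r_{N-2}$ (vertices $v_1,\dots,v_{N-1}$) by attaching one pendent edge (an edge containing one existing vertex and $r-1$ new vertices) at $v_2$ and one at $v_{N-2}$. $\cup$ denotes disjoint union. For an $r$-uniform hypergraph $\mathcal{K}$ on $n'$ vertices, $m(\mathcal{K},k)$ is the number of sets of $k$ pairwise disjoint edges ($m(\mathcal{K},0)=1$), $\varphi(\mathcal{K},x)=\sum_{k\geq0}(-1)^km(\mathcal{K},k)x^{n'-kr}$ is the matching polynomial, and $ME(\mathcal{K})$ is the sum of absolute values of all roots (with multiplicity) of $\varphi(\mathcal{K},x)$. The adjacency tensor has entries $a_{i_1\cdots i_r}=1/(r-1)!$ if $\{i_1,\dots,i_r\}$ is an edge and $0$ otherwise; $\lambda$ is an eigenvalue if some nonzero $x\in\mathbb{C}^{n'}$ satisfies $\sum_{i_2,\dots,i_r}a_{ii_2\cdots i_r}x_{i_2}\cdots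 x_{i_r}=\lambda x_i^{r-1}$ for all $i$; $\rho(\mathcal{K})$ is the maximum modulus of the eigenvalues. *)

theory Defs
  imports "HOL-Computational_Algebra.Polynomial" "HOL-Computational_Algebra.Fundamental_Theorem_Algebra"
begin

type_synonym 'a hg = "'a set \<times> 'a set set"

definition hverts :: "'a hg \<Rightarrow> 'a set" where "hverts H = fst H"
definition hedges :: "'a hg \<Rightarrow> 'a set set" where "hedges H = snd H"

definition hg_union :: "'a hg \<Rightarrow> 'b hg \<Rightarrow> ('a + 'b) hg" where
  "hg_union H K = (Inl ` hverts H \<union> Inr ` hverts K,
                   (\<lambda>e. Inl ` e) ` hedges H \<union> (\<lambda>e. Inr ` e) ` hedges K)"

text \<open>Loose path of length t: v_i = (i,0) for 1 \<le> i \<le> t+1, u_{i,j} = (i,j) for 1 \<le> j \<le> r-2.\<close>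
definition lp_edge :: "nat \<Rightarrow> nat \<Rightarrow> (nat \<times> nat) set" where
  "lp_edge r i = {(i,0), (Suc i,0)} \<union> {(i,j) | j. 1 \<le> j \<and> j \<le> r - 2}"

definition loose_path_edges :: "nat \<Rightarrow> nat \<Rightarrow> (nat \<times> nat) set set" where
  "loose_path_edges r t = lp_edge r ` {1..t}"

definition loose_path :: "nat \<Rightarrow> nat \<Rightarrow> (nat \<times> nat) hg" where
  "loose_path r t = (\<Union>(loose_path_edges r t), loose_path_edges r t)"

text \<open>W_N: loose path of length N-2 (vertices v_1..v_{N-1}) with a pendent edge at v_2
  (new vertices (0,j)) and one at v_{N-2} (new vertices (N,j)), 1 \<le> j \<le> r-1.\<close>
definition W_edges :: "nat \<Rightarrow> nat \<Rightarrow> (nat \<times> nat) set set" where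
  "W_edges r N = loose_path_edges r (N - 2)
     \<union> { {(2,0)} \<union> {(0,j) | j. 1 \<le> j \<and> j \<le> r - 1},
         {(N - 2,0)} \<union> {(N,j) | j. 1 \<le> j \<and> j \<le> r - 1} }"

definition W_hg :: "nat \<Rightarrow> nat \<Rightarrow> (nat \<times> nat) hg" where
  "W_hg r N = (\<Union>(W_edges r N), W_edges r N)"

definition num_matchings :: "'a hg \<Rightarrow> nat \<Rightarrow> nat" where
  "num_matchings H k = card {M. M \<subseteq> hedges H \<and> card M = k \<and>
      (\<forall>e\<in>M. \<forall>f\<in>M. e \<noteq> f \<longrightarrow> e \<inter> f = {})}"

text \<open>Matching polynomial of an r-uniform hypergraph (terms with k r > n' vanish since m = 0 there).\<close>
definition matching_poly :: "nat \<Rightarrow> 'a hg \<Rightarrow> real poly" where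
  "matching_poly r H = (\<Sum>k \<in> {k. k * r \<le> card (hverts H)}.
       monom ((-1) ^ k * of_nat (num_matchings H k)) (card (hverts H) - k * r))"

definition matching_energy :: "nat \<Rightarrow> 'a hg \<Rightarrow> real" where
  "matching_energy r H =
     (let p = map_poly complex_of_real (matching_poly r H) in
      \<Sum>z \<in> {z. poly p z = 0}. of_nat (order z p) * cmod z)"

definition adj_tensor :: "nat \<Rightarrow> 'a hg \<Rightarrow> 'a list \<Rightarrow> complex" where
  "adj_tensor r H is = (if set is \<in> hedges H then 1 / of_nat (fact (r - 1)) else 0)"

definition tensor_eigenvalue :: "nat \<Rightarrow> 'a hg \<Rightarrow> complex \<Rightarrow> bool" where
  "tensor_eigenvalue r H lam \<longleftrightarrow>
     (\<exists>x :: 'a \<Rightarrow> complex. (\<exists>i\<in>hverts H. x i \<noteq> 0) \<and>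
        (\<forall>i\<in>hverts H.
           (\<Sum>js \<in> {js. set js \<subseteq> hverts H \<and> length js = r - 1}.
               adj_tensor r H (i # js) * prod_list (map x js)) = lam * x i ^ (r - 1)))"

definition spectral_radius :: "nat \<Rightarrow> 'a hg \<Rightarrow> real" where
  "spectral_radius r H = Sup {cmod lam | lam. tensor_eigenvalue r H lam}"

end

theory Submission
  imports Defs "HOL-Combinatorics.Multiset_Permutations"
begin

(* Both unions have (m + n - 6)(r - 1) + 2 vertices, and the same generating polynomial of
   matching numbers: it is multiplicative over disjoint unions, the loose path of length t
   contributes J(t + 1), and deleting one pendent edge shows that W_N contributes
   (1 + 4x) J(N - 3), where J(k) is the matching generating polynomial of the ordinary path on
   k vertices. So both have J(m - 4) (1 + 4x) J(n - 4), hence equal matching polynomials and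
   matching energies.

   Both spectral radii equal 2^(2/r). W_N carries a positive vector y with \<A> y^(r-1) = 2^(2/r) y^[r-1];
   extended by zero it is an eigenvector of the union. The loose path carries a positive y with
   \<A> y^(r-1) \<le> 2^(2/r) y^[r-1], and the two positive vectors together bound the modulus of every
   eigenvalue of the union (Collatz-Wielandt). *)

section \<open>Matching generating polynomials\<close>

definition matchings :: "'a set set \<Rightarrow> 'a set set set" where
  "matchings E = {M. M \<subseteq> E \<and> pairwise disjnt M}"

definition matching_gen_poly :: "'a set set \<Rightarrow> int poly" where
  "matching_gen_poly E = (\<Sum>M\<in>matchings E. monom 1 (card M))"

lemma finite_matchings: "finite E \<Longrightarrow> finite (matchings E)"
  unfolding matchings_def by (rule finite_subset[of _ "Pow E"]) auto

lemma coeff_matching_gen_poly: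
  assumes "finite E"
  shows "coeff (matching_gen_poly E) k = int (card {M \<in> matchings E. card M = k})"
proof -
  have "coeff (matching_gen_poly E) k = (\<Sum>M\<in>matchings E. if card M = k then 1 else 0)"
    unfolding matching_gen_poly_def by (simp add: coeff_sum coeff_monom)
  then show ?thesis
    using finite_matchings[OF assms] by (simp add: sum.If_cases Int_def)
qed

lemma matching_gen_poly_empty [simp]: "matching_gen_poly {} = 1"
proof -
  have "matchings ({} :: 'a set set) = {{}}" unfolding matchings_def by auto
  then show ?thesis unfolding matching_gen_poly_def by simp
qed

lemma matchings_remove:
  assumes "e \<in> E"
  shows "matchings E = matchings (E - {e}) \<union> insert e ` matchings {f \<in> E - {e}. f \<inter> e = {}}"
  (is "_ = _ \<union> insert e ` matchings ?D")
proof (intro equalityI subsetI)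
  fix M assume M: "M \<in> matchings E"
  show "M \<in> matchings (E - {e}) \<union> insert e ` matchings ?D"
  proof (cases "e \<in> M")
    case True
    then have "M - {e} \<in> matchings ?D" "M = insert e (M - {e})"
      using M unfolding matchings_def pairwise_def disjnt_def by auto
    then show ?thesis by blast
  qed (use M in \<open>auto simp: matchings_def\<close>)
next
  fix M assume "M \<in> matchings (E - {e}) \<union> insert e ` matchings ?D"
  then consider "M \<in> matchings (E - {e})" | M' where "M' \<in> matchings ?D" "M = insert e M'"
    by blast
  then show "M \<in> matchings E"
  proof cases
    case 2
    then have "\<forall>f\<in>M'. disjnt e f \<and> disjnt f e"
      unfolding matchings_def disjnt_def by blast
    with 2 assms show ?thesis
      unfolding matchings_def by (auto simp: pairwise_insert)
  qed (auto simp: matchings_def)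
qed

lemma matching_gen_poly_remove:
  assumes "finite E" "e \<in> E"
  shows "matching_gen_poly E
           = matching_gen_poly (E - {e}) + [:0, 1:] * matching_gen_poly {f \<in> E - {e}. f \<inter> e = {}}"
proof -
  define D where "D = {f \<in> E - {e}. f \<inter> e = {}}"
  have e_notin: "e \<notin> M" if "M \<in> matchings D" for M
    using that unfolding matchings_def D_def by auto
  have finite_M: "finite M" if "M \<in> matchings D" for M
    using that assms(1) unfolding matchings_def D_def by (auto intro: finite_subset)
  have "inj_on (insert e) (matchings D)"
    by (rule inj_onI) (metis e_notin insert_ident)
  moreover have "matchings (E - {e}) \<inter> insert e ` matchings D = {}"
    unfolding matchings_def by auto
  moreover have "finite (matchings (E - {e}))" "finite (matchings D)"
    using assms(1) by (simp_all add: finite_matchings D_def)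
  ultimately have "matching_gen_poly E
      = matching_gen_poly (E - {e}) + (\<Sum>M\<in>matchings D. monom 1 (card (insert e M)))"
    unfolding matching_gen_poly_def matchings_remove[OF assms(2), folded D_def]
    by (simp add: sum.union_disjoint sum.reindex)
  also have "(\<Sum>M\<in>matchings D. monom 1 (card (insert e M))) = [:0, 1:] * matching_gen_poly D"
    unfolding matching_gen_poly_def sum_distrib_left
    by (intro sum.cong refl) (simp add: e_notin finite_M monom_Suc)
  finally show ?thesis unfolding D_def .
qed

lemma bij_betw_matchings_Un:
  assumes "E1 \<inter> E2 = {}"
    and cross: "\<And>e f. e \<in> E1 \<Longrightarrow> f \<in> E2 \<Longrightarrow> e \<inter> f = {}"
  shows "bij_betw (\<lambda>(M1, M2). M1 \<union> M2) (matchings E1 \<times> matchings E2) (matchings (E1 \<union> E2))"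
proof -
  let ?join = "\<lambda>(M1, M2). M1 \<union> M2"
  have join: "M1 \<union> M2 \<in> matchings (E1 \<union> E2)"
    if M1: "M1 \<in> matchings E1" and M2: "M2 \<in> matchings E2" for M1 M2
  proof -
    from M1 M2 have sub: "M1 \<subseteq> E1" "M2 \<subseteq> E2"
      and pw: "pairwise disjnt M1" "pairwise disjnt M2"
      unfolding matchings_def by auto
    have "disjnt e f" if "e \<in> M1" "f \<in> M2" for e f
      using cross[of e f] sub that unfolding disjnt_def by blast
    then have "pairwise disjnt (M1 \<union> M2)"
      using pw unfolding pairwise_def by (metis Un_iff disjnt_sym)
    then show ?thesis
      using sub unfolding matchings_def by blast
  qed
  show ?thesis
  proof (rule bij_betw_byWitness[where f' = "\<lambda>M. (M \<inter> E1, M \<inter> E2)"])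
    have "(M1 \<union> M2) \<inter> E1 = M1 \<and> (M1 \<union> M2) \<inter> E2 = M2"
      if "M1 \<in> matchings E1" "M2 \<in> matchings E2" for M1 M2
      using that assms(1) unfolding matchings_def by blast
    then show "\<forall>p\<in>matchings E1 \<times> matchings E2. ((?join p) \<inter> E1, (?join p) \<inter> E2) = p"
      by auto
    show "\<forall>M\<in>matchings (E1 \<union> E2). ?join (M \<inter> E1, M \<inter> E2) = M"
      unfolding matchings_def by auto
    show "?join ` (matchings E1 \<times> matchings E2) \<subseteq> matchings (E1 \<union> E2)"
      using join by auto
    show "(\<lambda>M. (M \<inter> E1, M \<inter> E2)) ` matchings (E1 \<union> E2) \<subseteq> matchings E1 \<times> matchings E2"
      unfolding matchings_def by (auto intro: pairwise_subset)
  qed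
qed

lemma matching_gen_poly_Un:
  assumes "finite E1" "finite E2" "E1 \<inter> E2 = {}"
    and cross: "\<And>e f. e \<in> E1 \<Longrightarrow> f \<in> E2 \<Longrightarrow> e \<inter> f = {}"
  shows "matching_gen_poly (E1 \<union> E2) = matching_gen_poly E1 * matching_gen_poly E2"
proof -
  have bij: "bij_betw (\<lambda>(M1, M2). M1 \<union> M2) (matchings E1 \<times> matchings E2) (matchings (E1 \<union> E2))"
    using assms(3) cross by (rule bij_betw_matchings_Un)
  have card_join: "card (M1 \<union> M2) = card M1 + card M2"
    if "M1 \<in> matchings E1" "M2 \<in> matchings E2" for M1 M2
    using that assms(1-3) unfolding matchings_def
    by (intro card_Un_disjoint) (auto intro: finite_subset)
  have "matching_gen_poly (E1 \<union> E2)
      = (\<Sum>(M1, M2)\<in>matchings E1 \<times> matchings E2. monom 1 (card (M1 \<union> M2)))"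
    unfolding matching_gen_poly_def sum.reindex_bij_betw[OF bij, symmetric]
    by (simp add: case_prod_unfold)
  also have "\<dots> = (\<Sum>M1\<in>matchings E1. \<Sum>M2\<in>matchings E2. monom 1 (card M1) * monom 1 (card M2))"
    unfolding sum.cartesian_product by (intro sum.cong refl) (auto simp: card_join mult_monom)
  also have "\<dots> = matching_gen_poly E1 * matching_gen_poly E2"
    unfolding matching_gen_poly_def by (rule sum_product[symmetric])
  finally show ?thesis .
qed

lemma disjnt_image_iff: "inj f \<Longrightarrow> disjnt (f ` X) (f ` Y) \<longleftrightarrow> disjnt X Y"
  by (intro disjnt_inj_on_iff[of f "{X, Y}"]) (auto intro: inj_on_subset)

lemma matchings_image:
  assumes "inj f"
  shows "matchings ((`) f ` E) = (`) ((`) f) ` matchings E"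
proof (intro equalityI subsetI)
  fix M' assume M': "M' \<in> matchings ((`) f ` E)"
  define M where "M = {e \<in> E. f ` e \<in> M'}"
  have "M' = (`) f ` M"
    using M' unfolding matchings_def M_def by auto
  moreover have "disjnt e e'" if "e \<in> M" "e' \<in> M" "e \<noteq> e'" for e e'
  proof -
    have "f ` e \<noteq> f ` e'"
      using \<open>e \<noteq> e'\<close> by (simp add: inj_image_eq_iff[OF assms])
    moreover have "f ` e \<in> M'" "f ` e' \<in> M'" "pairwise disjnt M'"
      using that M' unfolding M_def matchings_def by auto
    ultimately have "disjnt (f ` e) (f ` e')"
      by (simp add: pairwise_def)
    then show ?thesis
      by (simp add: disjnt_image_iff[OF assms])
  qed
  then have "M \<in> matchings E"
    unfolding matchings_def M_def pairwise_def by blast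
  ultimately show "M' \<in> (`) ((`) f) ` matchings E"
    by blast
next
  fix M' assume "M' \<in> (`) ((`) f) ` matchings E"
  then obtain M where M: "M \<subseteq> E" "pairwise disjnt M" "M' = (`) f ` M"
    unfolding matchings_def by blast
  then have "pairwise disjnt M'"
    by (auto simp: pairwise_image disjnt_image_iff[OF assms] elim: pairwise_mono)
  with M show "M' \<in> matchings ((`) f ` E)"
    unfolding matchings_def by blast
qed

lemma matching_gen_poly_image:
  assumes "inj f"
  shows "matching_gen_poly ((`) f ` E) = matching_gen_poly E"
proof -
  have inj_image: "inj ((`) f)"
    by (rule injI) (simp add: inj_image_eq_iff[OF assms])
  then have "inj_on ((`) ((`) f)) (matchings E)"
    by (simp add: inj_on_def inj_image_eq_iff)
  then have "matching_gen_poly ((`) f ` E) = (\<Sum>M\<in>matchings E. monom 1 (card ((`) f ` M)))"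
    unfolding matching_gen_poly_def matchings_image[OF assms] by (simp add: sum.reindex)
  also have "\<dots> = matching_gen_poly E"
    unfolding matching_gen_poly_def using inj_image by (simp add: card_image inj_on_subset)
  finally show ?thesis .
qed

lemma num_matchings_eq_card_matchings:
  "num_matchings H k = card {M \<in> matchings (hedges H). card M = k}"
  unfolding num_matchings_def matchings_def pairwise_def disjnt_def
  by (rule arg_cong[where f = card]) auto

lemma matching_energy_eqI:
  assumes "finite (hedges H)" "finite (hedges K)"
    and "card (hverts H) = card (hverts K)"
    and "matching_gen_poly (hedges H) = matching_gen_poly (hedges K)"
  shows "matching_energy r H = matching_energy r K"
proof -
  have "num_matchings H k = num_matchings K k" for k
    using coeff_matching_gen_poly[OF assms(1), of k] coeff_matching_gen_poly[OF assms(2), of k] assms(4)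
    by (simp add: num_matchings_eq_card_matchings)
  then show ?thesis
    unfolding matching_energy_def matching_poly_def assms(3) by presburger
qed

lemma hverts_hg_union: "hverts (hg_union H K) = Inl ` hverts H \<union> Inr ` hverts K"
  unfolding hg_union_def hverts_def by simp

lemma hedges_hg_union: "hedges (hg_union H K) = (`) Inl ` hedges H \<union> (`) Inr ` hedges K"
  unfolding hg_union_def hedges_def by simp

lemma matching_gen_poly_hg_union:
  fixes H :: "'a hg" and K :: "'b hg"
  assumes "finite (hedges H)" "finite (hedges K)" "{} \<notin> hedges H"
  shows "matching_gen_poly (hedges (hg_union H K))
           = matching_gen_poly (hedges H) * matching_gen_poly (hedges K)"
proof -
  have disj: "(`) Inl ` hedges H \<inter> (`) Inr ` hedges K = {}"
  proof (rule equals0I)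
    fix x assume "x \<in> (`) Inl ` hedges H \<inter> (`) Inr ` hedges K"
    then obtain e f where e: "e \<in> hedges H" and x: "x = Inl ` e" "x = Inr ` f"
      by blast
    obtain a where "a \<in> e"
      using e assms(3) by (metis ex_in_conv)
    then have "Inl a \<in> Inr ` f"
      using x by blast
    then show False
      by blast
  qed
  have "matching_gen_poly (hedges (hg_union H K))
      = matching_gen_poly ((`) (Inl :: 'a \<Rightarrow> 'a + 'b) ` hedges H)
        * matching_gen_poly ((`) (Inr :: 'b \<Rightarrow> 'a + 'b) ` hedges K)"
    unfolding hedges_hg_union by (rule matching_gen_poly_Un) (use disj assms(1,2) in auto)
  then show ?thesis
    by (simp add: matching_gen_poly_image)
qed

lemma card_hverts_hg_union:
  assumes "finite (hverts H)" "finite (hverts K)"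
  shows "card (hverts (hg_union H K)) = card (hverts H) + card (hverts K)"
  unfolding hverts_hg_union
  by (subst card_Un_disjoint) (use assms in \<open>auto simp: card_image\<close>)

section \<open>Loose paths\<close>

lemma lp_edge_eq: "lp_edge r i = insert (i, 0) (insert (Suc i, 0) (Pair i ` {1..r-2}))"
  unfolding lp_edge_def by auto

lemma mem_lp_edge:
  "(x, y) \<in> lp_edge r i \<longleftrightarrow> y = 0 \<and> (x = i \<or> x = Suc i) \<or> x = i \<and> 1 \<le> y \<and> y \<le> r - 2"
  unfolding lp_edge_def by auto

lemma finite_lp_edge [simp]: "finite (lp_edge r i)"
  by (simp add: lp_edge_eq)

lemma card_lp_edge: "r \<ge> 2 \<Longrightarrow> card (lp_edge r i) = r"
  unfolding lp_edge_eq by (simp add: card_image image_iff inj_on_def)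

lemma inj_lp_edge: "inj (lp_edge r)"
proof (rule injI)
  fix i j assume "lp_edge r i = lp_edge r j"
  moreover have "(i, 0) \<in> lp_edge r i" "(Suc i, 0) \<in> lp_edge r i"
    by (simp_all add: mem_lp_edge)
  ultimately have "(i, 0) \<in> lp_edge r j" "(Suc i, 0) \<in> lp_edge r j"
    by simp_all
  then show "i = j"
    by (auto simp: mem_lp_edge)
qed

lemma lp_edge_disjoint_iff:
  "lp_edge r i \<inter> lp_edge r j = {} \<longleftrightarrow> i \<noteq> j \<and> i \<noteq> Suc j \<and> j \<noteq> Suc i"
proof
  assume disj: "lp_edge r i \<inter> lp_edge r j = {}"
  have "(i, 0) \<in> lp_edge r i" "(j, 0) \<in> lp_edge r j"
    by (simp_all add: mem_lp_edge)
  then have "(i, 0) \<notin> lp_edge r j" "(j, 0) \<notin> lp_edge r i"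
    using disj by blast+
  then show "i \<noteq> j \<and> i \<noteq> Suc j \<and> j \<noteq> Suc i"
    by (auto simp: mem_lp_edge)
qed (auto simp: mem_lp_edge)

lemma hedges_loose_path: "hedges (loose_path r a) = lp_edge r ` {1..a}"
  unfolding loose_path_def hedges_def loose_path_edges_def by simp

lemma hverts_loose_path: "hverts (loose_path r a) = \<Union>(lp_edge r ` {1..a})"
  unfolding loose_path_def hverts_def loose_path_edges_def by simp

lemma hverts_loose_path_eq:
  assumes "a \<ge> 1"
  shows "hverts (loose_path r a) = {1..Suc a} \<times> {0} \<union> {1..a} \<times> {1..r-2}"
proof (intro equalityI subsetI)
  fix v assume "v \<in> hverts (loose_path r a)"
  then show "v \<in> {1..Suc a} \<times> {0} \<union> {1..a} \<times> {1..r-2}"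
    unfolding hverts_loose_path by (cases v) (auto simp: mem_lp_edge)
next
  fix v assume v: "v \<in> {1..Suc a} \<times> {0} \<union> {1..a} \<times> {1..r-2}"
  then obtain x y where xy: "v = (x, y)"
    by (cases v)
  have "v \<in> lp_edge r (min x a)" "min x a \<in> {1..a}"
    using v assms unfolding xy by (auto simp: mem_lp_edge min_def)
  then show "v \<in> hverts (loose_path r a)"
    unfolding hverts_loose_path by blast
qed

lemma card_hverts_loose_path:
  assumes "a \<ge> 1" "r \<ge> 2"
  shows "card (hverts (loose_path r a)) = a * (r - 1) + 1"
proof -
  have "card (hverts (loose_path r a)) = card ({1..Suc a} \<times> {0::nat}) + card ({1..a} \<times> {1..r-2})"
    unfolding hverts_loose_path_eq[OF assms(1)] by (rule card_Un_disjoint) auto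
  also have "\<dots> = a * (r - 1) + 1"
  proof -
    have "r - 1 = Suc (r - 2)"
      using assms(2) by simp
    then show ?thesis
      by (simp add: card_cartesian_product)
  qed
  finally show ?thesis .
qed

(* the matching generating polynomial of the ordinary path on n vertices *)
fun path_matching_poly :: "nat \<Rightarrow> int poly" where
  "path_matching_poly 0 = 1"
| "path_matching_poly (Suc 0) = 1"
| "path_matching_poly (Suc (Suc n)) = path_matching_poly (Suc n) + [:0, 1:] * path_matching_poly n"

lemma matching_gen_poly_lp_edges_remove_last:
  assumes "t \<ge> 1"
  shows "matching_gen_poly (lp_edge r ` {a+1..a+t})
           = matching_gen_poly (lp_edge r ` {a+1..a+(t-1)})
             + [:0, 1:] * matching_gen_poly (lp_edge r ` {a+1..a+(t-2)})"
proof -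
  let ?e = "lp_edge r (a + t)"
  have "lp_edge r ` {a+1..a+t} - {?e} = lp_edge r ` ({a+1..a+t} - {a+t})"
    by (simp add: image_set_diff[OF inj_lp_edge])
  also have "{a+1..a+t} - {a+t} = {a+1..a+(t-1)}"
    using assms by auto
  finally have rest: "lp_edge r ` {a+1..a+t} - {?e} = lp_edge r ` {a+1..a+(t-1)}" .
  have "{f \<in> lp_edge r ` {a+1..a+(t-1)}. f \<inter> ?e = {}}
      = lp_edge r ` {i \<in> {a+1..a+(t-1)}. lp_edge r i \<inter> ?e = {}}"
    by blast
  also have "{i \<in> {a+1..a+(t-1)}. lp_edge r i \<inter> ?e = {}} = {a+1..a+(t-2)}"
    using assms by (auto simp: lp_edge_disjoint_iff)
  finally have disjoint_rest: "{f \<in> lp_edge r ` {a+1..a+(t-1)}. f \<inter> ?e = {}} = lp_edge r ` {a+1..a+(t-2)}" .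
  have "?e \<in> lp_edge r ` {a+1..a+t}"
    using assms by simp
  then show ?thesis
    using matching_gen_poly_remove[of "lp_edge r ` {a+1..a+t}" ?e]
    by (simp only: rest disjoint_rest finite_imageI finite_atLeastAtMost)
qed

lemma matching_gen_poly_lp_edges:
  "matching_gen_poly (lp_edge r ` {a+1..a+t}) = path_matching_poly (Suc t)"
proof (induction t rule: path_matching_poly.induct)
  case 1
  show ?case by simp
next
  case 2
  then show ?case
    using matching_gen_poly_lp_edges_remove_last[of 1 r a] by simp
next
  case (3 n)
  then show ?case
    using matching_gen_poly_lp_edges_remove_last[of "Suc (Suc n)" r a] by simp
qed

lemma matching_gen_poly_loose_path:
  "matching_gen_poly (hedges (loose_path r a)) = path_matching_poly (Suc a)"
  using matching_gen_poly_lp_edges[of r 0 a] by (simp add: hedges_loose_path)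

section \<open>The hypergraph W_N\<close>

definition pendant_edge :: "nat \<Rightarrow> nat \<Rightarrow> nat \<Rightarrow> (nat \<times> nat) set" where
  "pendant_edge r v c = insert (v, 0) (Pair c ` {1..r-1})"

lemma mem_pendant_edge:
  "(x, y) \<in> pendant_edge r v c \<longleftrightarrow> x = v \<and> y = 0 \<or> x = c \<and> 1 \<le> y \<and> y \<le> r - 1"
  unfolding pendant_edge_def by auto

lemma finite_pendant_edge [simp]: "finite (pendant_edge r v c)"
  by (simp add: pendant_edge_def)

lemma card_pendant_edge: "r \<ge> 1 \<Longrightarrow> card (pendant_edge r v c) = r"
  unfolding pendant_edge_def by (simp add: card_image image_iff inj_on_def)

lemma W_edges_eq:
  "W_edges r N = lp_edge r ` {1..N-2} \<union> {pendant_edge r 2 0, pendant_edge r (N-2) N}"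
  unfolding W_edges_def loose_path_edges_def pendant_edge_def by auto

lemma hverts_W_hg: "hverts (W_hg r N) = \<Union>(W_edges r N)"
  unfolding W_hg_def hverts_def by simp

lemma hedges_W_hg: "hedges (W_hg r N) = W_edges r N"
  unfolding W_hg_def hedges_def by simp

lemma hverts_W_hg_eq:
  assumes "N \<ge> 4"
  shows "hverts (W_hg r N) = hverts (loose_path r (N - 2)) \<union> {0, N} \<times> {1..r-1}"
proof -
  have "(2, 0) \<in> lp_edge r 2" "(N - 2, 0) \<in> lp_edge r (N - 2)"
    by (simp_all add: mem_lp_edge)
  then have "(2, 0) \<in> hverts (loose_path r (N - 2))" "(N - 2, 0) \<in> hverts (loose_path r (N - 2))"
    using assms unfolding hverts_loose_path by auto
  then show ?thesis
    unfolding hverts_W_hg W_edges_eq pendant_edge_def hverts_loose_path by auto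
qed

lemma card_hverts_W_hg:
  assumes "N \<ge> 4" "r \<ge> 2"
  shows "card (hverts (W_hg r N)) = N * (r - 1) + 1"
proof -
  have "hverts (loose_path r (N - 2)) \<inter> {0, N} \<times> {1..r-1} = {}"
    using assms(1) by (auto simp: hverts_loose_path_eq)
  then have "card (hverts (W_hg r N)) = card (hverts (loose_path r (N - 2))) + card ({0, N} \<times> {1..r-1})"
    unfolding hverts_W_hg_eq[OF assms(1)]
    by (intro card_Un_disjoint) (auto simp: hverts_loose_path)
  also have "\<dots> = (N - 2) * (r - 1) + 1 + 2 * (r - 1)"
    using assms by (simp add: card_hverts_loose_path card_cartesian_product)
  also have "\<dots> = N * (r - 1) + 1"
  proof -
    have "N = (N - 2) + 2"
      using assms(1) by simp
    then obtain M where "N = M + 2"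
      by blast
    then show ?thesis
      by (simp add: distrib_right)
  qed
  finally show ?thesis .
qed

lemma pendant_edge_notin_lp_edges:
  assumes "r \<ge> 2" "c \<notin> S"
  shows "pendant_edge r v c \<notin> lp_edge r ` S"
proof
  assume "pendant_edge r v c \<in> lp_edge r ` S"
  moreover have "(c, 1) \<in> pendant_edge r v c"
    using assms(1) by (simp add: mem_pendant_edge)
  ultimately show False
    using assms(2) by (auto simp: mem_lp_edge)
qed

lemma lp_edge_Int_pendant_edge:
  "c \<noteq> i \<Longrightarrow> lp_edge r i \<inter> pendant_edge r v c = {} \<longleftrightarrow> v \<noteq> i \<and> v \<noteq> Suc i"
  by (auto simp: lp_edge_def pendant_edge_def)

lemma matching_gen_poly_lp_edges_pendant:
  assumes "t \<ge> 1" "r \<ge> 2" "c \<notin> {a+1..a+t}"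
  shows "matching_gen_poly (lp_edge r ` {a+1..a+t} \<union> {pendant_edge r (a+t) c})
           = path_matching_poly (Suc t) + [:0, 1:] * path_matching_poly (t - 1)"
proof -
  let ?p = "pendant_edge r (a+t) c"
  let ?E = "lp_edge r ` {a+1..a+t} \<union> {?p}"
  have rest: "?E - {?p} = lp_edge r ` {a+1..a+t}"
    using pendant_edge_notin_lp_edges[OF assms(2,3)] by blast
  have "{f \<in> lp_edge r ` {a+1..a+t}. f \<inter> ?p = {}}
      = lp_edge r ` {i \<in> {a+1..a+t}. lp_edge r i \<inter> ?p = {}}"
    by blast
  also have "{i \<in> {a+1..a+t}. lp_edge r i \<inter> ?p = {}} = {i \<in> {a+1..a+t}. a + t \<noteq> i \<and> a + t \<noteq> Suc i}"
    using assms(3) by (intro Collect_cong conj_cong refl lp_edge_Int_pendant_edge) auto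
  also have "\<dots> = {a+1..a+(t-2)}"
    using assms(1) by auto
  finally have disjoint_rest: "{f \<in> lp_edge r ` {a+1..a+t}. f \<inter> ?p = {}} = lp_edge r ` {a+1..a+(t-2)}" .
  have "matching_gen_poly ?E
      = matching_gen_poly (lp_edge r ` {a+1..a+t}) + [:0, 1:] * matching_gen_poly (lp_edge r ` {a+1..a+(t-2)})"
    using matching_gen_poly_remove[of ?E ?p] by (simp only: rest disjoint_rest) simp
  also have "\<dots> = path_matching_poly (Suc t) + [:0, 1:] * path_matching_poly (Suc (t - 2))"
    by (simp only: matching_gen_poly_lp_edges)
  also have "path_matching_poly (Suc (t - 2)) = path_matching_poly (t - 1)"
    using assms(1) by (cases "t = 1") (simp_all add: Suc_diff_Suc numeral_2_eq_2)
  finally show ?thesis .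
qed

lemma W_pendant_edges_distinct:
  assumes "N \<ge> 5" "r \<ge> 2"
  shows "pendant_edge r 2 0 \<noteq> pendant_edge r (N-2) N"
    and "pendant_edge r 2 0 \<notin> lp_edge r ` {1..N-2}"
    and "pendant_edge r (N-2) N \<notin> lp_edge r ` {1..N-2}"
proof -
  have "(0, 1) \<in> pendant_edge r 2 0" "(0, 1) \<notin> pendant_edge r (N-2) N"
    using assms by (simp_all add: mem_pendant_edge)
  then show "pendant_edge r 2 0 \<noteq> pendant_edge r (N-2) N"
    by blast
  show "pendant_edge r 2 0 \<notin> lp_edge r ` {1..N-2}" "pendant_edge r (N-2) N \<notin> lp_edge r ` {1..N-2}"
    by (rule pendant_edge_notin_lp_edges; use assms in simp)+
qed

lemma matching_gen_poly_W_edges_remove_pendant: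
  assumes "N \<ge> 5" "r \<ge> 2"
  shows "matching_gen_poly (W_edges r N)
           = matching_gen_poly (lp_edge r ` {1..N-2} \<union> {pendant_edge r (N-2) N})
             + [:0, 1:] * matching_gen_poly (lp_edge r ` {3..N-2} \<union> {pendant_edge r (N-2) N})"
proof -
  let ?p = "pendant_edge r 2 0" and ?q = "pendant_edge r (N-2) N"
  have E: "W_edges r N = lp_edge r ` {1..N-2} \<union> {?q} \<union> {?p}"
    unfolding W_edges_eq by auto
  have rest: "W_edges r N - {?p} = lp_edge r ` {1..N-2} \<union> {?q}"
    unfolding E using W_pendant_edges_distinct[OF assms] by blast
  have "?q \<inter> ?p = {}"
    using assms(1) by (auto simp: pendant_edge_def)
  moreover have "{i \<in> {1..N-2}. lp_edge r i \<inter> ?p = {}} = {i \<in> {1..N-2}. 2 \<noteq> i \<and> 2 \<noteq> Suc i}"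
    by (intro Collect_cong conj_cong refl lp_edge_Int_pendant_edge) auto
  moreover have "{i \<in> {1..N-2}. 2 \<noteq> i \<and> 2 \<noteq> Suc i} = {3..N-2}"
    by auto
  ultimately have disjoint_rest:
    "{f \<in> lp_edge r ` {1..N-2} \<union> {?q}. f \<inter> ?p = {}} = lp_edge r ` {3..N-2} \<union> {?q}"
    by blast
  have "finite (W_edges r N)" "?p \<in> W_edges r N"
    unfolding E by auto
  from matching_gen_poly_remove[OF this] show ?thesis
    by (simp only: rest disjoint_rest)
qed

lemma path_matching_poly_identity:
  "path_matching_poly (k + 4) + [:0, 1:] * path_matching_poly (k + 2)
     + [:0, 1:] * (path_matching_poly (k + 2) + [:0, 1:] * path_matching_poly k)
   = [:1, 4:] * path_matching_poly (k + 2)"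
proof -
  have "path_matching_poly (k + 4)
      = path_matching_poly (k + 2) + [:0, 1:] * (path_matching_poly (k + 1) + path_matching_poly (k + 2))"
    by (simp add: numeral_eq_Suc algebra_simps)
  moreover have "path_matching_poly (k + 2) = path_matching_poly (k + 1) + [:0, 1:] * path_matching_poly k"
    by (simp add: numeral_eq_Suc)
  moreover have "[:1, 4:] = 1 + 4 * [:0, 1 :: int:]"
    by (simp add: one_pCons numeral_poly)
  ultimately show ?thesis
    by algebra
qed

lemma matching_gen_poly_W_edges:
  assumes "N \<ge> 5" "r \<ge> 2"
  shows "matching_gen_poly (W_edges r N) = [:1, 4:] * path_matching_poly (N - 3)"
proof -
  obtain k where k: "N = k + 5"
    using assms(1) by (metis add.commute le_Suc_ex)
  have "matching_gen_poly (W_edges r N)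
      = matching_gen_poly (lp_edge r ` {1..k+3} \<union> {pendant_edge r (k+3) N})
        + [:0, 1:] * matching_gen_poly (lp_edge r ` {3..k+3} \<union> {pendant_edge r (k+3) N})"
    using matching_gen_poly_W_edges_remove_pendant[OF assms] by (simp add: k add.commute)
  also have "matching_gen_poly (lp_edge r ` {1..k+3} \<union> {pendant_edge r (k+3) N})
      = path_matching_poly (k + 4) + [:0, 1:] * path_matching_poly (k + 2)"
  proof -
    have "matching_gen_poly (lp_edge r ` {0+1..0+(k+3)} \<union> {pendant_edge r (0+(k+3)) N})
        = path_matching_poly (Suc (k + 3)) + [:0, 1:] * path_matching_poly (k + 3 - 1)"
      by (rule matching_gen_poly_lp_edges_pendant) (use assms(2) k in auto)
    moreover have "0 + 1 = (1::nat)" "0 + (k + 3) = k + 3" "Suc (k + 3) = k + 4" "k + 3 - 1 = k + 2"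
      by simp_all
    ultimately show ?thesis
      by (simp only:)
  qed
  also have "matching_gen_poly (lp_edge r ` {3..k+3} \<union> {pendant_edge r (k+3) N})
      = path_matching_poly (k + 2) + [:0, 1:] * path_matching_poly k"
  proof -
    have "matching_gen_poly (lp_edge r ` {2+1..2+(k+1)} \<union> {pendant_edge r (2+(k+1)) N})
        = path_matching_poly (Suc (k + 1)) + [:0, 1:] * path_matching_poly (k + 1 - 1)"
      by (rule matching_gen_poly_lp_edges_pendant) (use assms(2) k in auto)
    moreover have "2 + 1 = (3::nat)" "2 + (k + 1) = k + 3" "Suc (k + 1) = k + 2" "k + 1 - 1 = k"
      by simp_all
    ultimately show ?thesis
      by (simp only:)
  qed
  also have "path_matching_poly (k + 4) + [:0, 1:] * path_matching_poly (k + 2)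
      + [:0, 1:] * (path_matching_poly (k + 2) + [:0, 1:] * path_matching_poly k)
      = [:1, 4:] * path_matching_poly (k + 2)"
    by (rule path_matching_poly_identity)
  also have "k + 2 = N - 3"
    using k by simp
  finally show ?thesis .
qed

section \<open>Eigenvalues of the adjacency tensor\<close>

definition uniform_hg :: "nat \<Rightarrow> 'a hg \<Rightarrow> bool" where
  "uniform_hg r H \<longleftrightarrow> finite (hverts H) \<and> (\<forall>e\<in>hedges H. e \<subseteq> hverts H \<and> card e = r)"

(* For an r-uniform H, adj_action H x v is the v-th entry of \<A> x^(r-1). *)
definition adj_action :: "'a hg \<Rightarrow> ('a \<Rightarrow> 'b::comm_semiring_1) \<Rightarrow> 'a \<Rightarrow> 'b" where
  "adj_action H x v = (\<Sum>e\<in>{e \<in> hedges H. v \<in> e}. \<Prod>u\<in>e - {v}. x u)"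

lemma uniform_hg_finite_hedges:
  "uniform_hg r H \<Longrightarrow> finite (hedges H)"
  unfolding uniform_hg_def by (auto intro: finite_subset[of _ "Pow (hverts H)"])

lemma uniform_hg_card_remove:
  "uniform_hg r H \<Longrightarrow> e \<in> hedges H \<Longrightarrow> v \<in> e \<Longrightarrow> finite e \<and> card (e - {v}) = r - 1"
  unfolding uniform_hg_def by (auto intro: finite_subset)

lemma edge_lists_eq_permutations_of_set:
  assumes "uniform_hg r H" "r \<ge> 1" "e \<in> hedges H" "i \<in> e"
  shows "{js. set js \<subseteq> hverts H \<and> length js = r - 1 \<and> set (i # js) = e}
           = permutations_of_set (e - {i})"
proof (intro equalityI subsetI)
  have e: "e \<subseteq> hverts H" "card e = r" "finite e"
    using assms(1,3) unfolding uniform_hg_def by (auto intro: finite_subset)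
  fix js assume "js \<in> {js. set js \<subseteq> hverts H \<and> length js = r - 1 \<and> set (i # js) = e}"
  then have js: "length (i # js) = card (set (i # js))" "set (i # js) = e"
    using e(2) assms(2) by auto
  then have "distinct (i # js)"
    by (metis card_distinct)
  then show "js \<in> permutations_of_set (e - {i})"
    using js(2) by (auto simp: permutations_of_set_def)
next
  fix js assume "js \<in> permutations_of_set (e - {i})"
  then have "set js = e - {i}" "length js = card (e - {i})"
    by (auto simp: permutations_of_setD length_finite_permutations_of_set)
  then show "js \<in> {js. set js \<subseteq> hverts H \<and> length js = r - 1 \<and> set (i # js) = e}"
    using assms uniform_hg_card_remove[OF assms(1,3,4)] unfolding uniform_hg_def by auto
qed

lemma sum_adj_tensor_eq_adj_action:
  assumes H: "uniform_hg r H" and r: "r \<ge> 1"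
  shows "(\<Sum>js\<in>{js. set js \<subseteq> hverts H \<and> length js = r - 1}.
            adj_tensor r H (i # js) * prod_list (map x js))
         = adj_action H x i"
proof -
  define Ls where "Ls = {js. set js \<subseteq> hverts H \<and> length js = r - 1}"
  define Ei where "Ei = {e \<in> hedges H. i \<in> e}"
  define c :: complex where "c = 1 / of_nat (fact (r - 1))"
  have fin: "finite Ls" "finite Ei"
    using H uniform_hg_finite_hedges[OF H] unfolding Ls_def Ei_def uniform_hg_def
    by (simp_all add: finite_lists_length_eq)
  have "(\<Sum>js\<in>Ls. adj_tensor r H (i # js) * prod_list (map x js))
      = (\<Sum>js\<in>{js \<in> Ls. set (i # js) \<in> Ei}. c * prod_list (map x js))"
    unfolding sum.inter_filter[OF fin(1)] by (intro sum.cong refl) (simp add: adj_tensor_def Ei_def c_def)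
  also have "\<dots> = (\<Sum>e\<in>Ei. \<Sum>js\<in>{js \<in> {js \<in> Ls. set (i # js) \<in> Ei}. set (i # js) = e}.
      c * prod_list (map x js))"
    by (rule sum.group[symmetric]) (use fin in auto)
  also have "\<dots> = (\<Sum>e\<in>Ei. \<Sum>js\<in>permutations_of_set (e - {i}). c * (\<Prod>u\<in>e - {i}. x u))"
  proof (rule sum.cong[OF refl])
    fix e assume e: "e \<in> Ei"
    have "{js \<in> {js \<in> Ls. set (i # js) \<in> Ei}. set (i # js) = e}
        = {js. set js \<subseteq> hverts H \<and> length js = r - 1 \<and> set (i # js) = e}"
      using e unfolding Ls_def by auto
    also have "\<dots> = permutations_of_set (e - {i})"
      using edge_lists_eq_permutations_of_set[OF H r] e unfolding Ei_def by auto
    finally have lists: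
      "{js \<in> {js \<in> Ls. set (i # js) \<in> Ei}. set (i # js) = e} = permutations_of_set (e - {i})" .
    have "prod_list (map x js) = (\<Prod>u\<in>e - {i}. x u)" if "js \<in> permutations_of_set (e - {i})" for js
      using that by (metis permutations_of_setD prod.distinct_set_conv_list)
    then show "(\<Sum>js\<in>{js \<in> {js \<in> Ls. set (i # js) \<in> Ei}. set (i # js) = e}. c * prod_list (map x js))
        = (\<Sum>js\<in>permutations_of_set (e - {i}). c * (\<Prod>u\<in>e - {i}. x u))"
      unfolding lists by simp
  qed
  also have "\<dots> = adj_action H x i"
  proof -
    have "card (permutations_of_set (e - {i})) = fact (r - 1)" if "e \<in> Ei" for e
      using uniform_hg_card_remove[OF H] that unfolding Ei_def by auto
    then show ?thesis
      unfolding adj_action_def Ei_def[symmetric] c_def by simp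
  qed
  finally show ?thesis
    unfolding Ls_def .
qed

lemma tensor_eigenvalue_iff:
  assumes "uniform_hg r H" "r \<ge> 1"
  shows "tensor_eigenvalue r H lam
           \<longleftrightarrow> (\<exists>x. (\<exists>i\<in>hverts H. x i \<noteq> 0)
                  \<and> (\<forall>i\<in>hverts H. adj_action H x i = lam * x i ^ (r - 1)))"
  unfolding tensor_eigenvalue_def
  by (intro ex_cong1 conj_cong refl ball_cong) (simp_all only: sum_adj_tensor_eq_adj_action[OF assms])

lemma norm_adj_action_le:
  fixes x :: "'a \<Rightarrow> 'b::real_normed_field" and y :: "'a \<Rightarrow> real"
  assumes H: "uniform_hg r H" and "t \<ge> 0" and xy: "\<forall>u\<in>hverts H. norm (x u) \<le> t * y u"
  shows "norm (adj_action H x v) \<le> t ^ (r - 1) * adj_action H y v"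
proof -
  have "norm (adj_action H x v) \<le> (\<Sum>e\<in>{e \<in> hedges H. v \<in> e}. \<Prod>u\<in>e - {v}. norm (x u))"
    unfolding adj_action_def by (rule order_trans[OF norm_sum]) (simp add: prod_norm)
  also have "\<dots> \<le> (\<Sum>e\<in>{e \<in> hedges H. v \<in> e}. \<Prod>u\<in>e - {v}. t * y u)"
    using H xy unfolding uniform_hg_def by (intro sum_mono prod_mono) auto
  also have "\<dots> = t ^ (r - 1) * adj_action H y v"
    unfolding adj_action_def sum_distrib_left
  proof (intro sum.cong refl)
    fix e assume "e \<in> {e \<in> hedges H. v \<in> e}"
    then have "card (e - {v}) = r - 1"
      using uniform_hg_card_remove[OF H] by blast
    then show "(\<Prod>u\<in>e - {v}. t * y u) = t ^ (r - 1) * (\<Prod>u\<in>e - {v}. y u)"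
      by (simp add: prod.distrib)
  qed
  finally show ?thesis .
qed

(* Collatz-Wielandt bound: compare an eigenvector x with y at a vertex maximising |x v| / y v. *)
lemma tensor_eigenvalue_norm_le:
  fixes y :: "'a \<Rightarrow> real"
  assumes H: "uniform_hg r H" and r: "r \<ge> 1"
    and pos: "\<forall>v\<in>hverts H. y v > 0"
    and sub: "\<forall>v\<in>hverts H. adj_action H y v \<le> \<rho> * y v ^ (r - 1)"
    and "tensor_eigenvalue r H lam"
  shows "cmod lam \<le> \<rho>"
proof -
  obtain x where nz: "\<exists>i\<in>hverts H. x i \<noteq> 0"
    and eig: "\<forall>i\<in>hverts H. adj_action H x i = lam * x i ^ (r - 1)"
    using assms(5) tensor_eigenvalue_iff[OF H r] by blast
  define ratio where "ratio v = cmod (x v) / y v" for v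
  have "finite (hverts H)" "hverts H \<noteq> {}"
    using H nz by (auto simp: uniform_hg_def)
  then obtain i where "is_arg_min (\<lambda>u. - ratio u) (\<lambda>u. u \<in> hverts H) i"
    using ex_is_arg_min_if_finite by blast
  then have i: "i \<in> hverts H" "\<forall>u\<in>hverts H. ratio u \<le> ratio i"
    by (auto simp: is_arg_min_linorder)
  define t where "t = ratio i"
  have bound: "\<forall>u\<in>hverts H. cmod (x u) \<le> t * y u"
    using i(2) pos unfolding t_def ratio_def by (auto simp: pos_divide_le_eq)
  have "t > 0"
  proof -
    obtain i0 where i0: "i0 \<in> hverts H" "x i0 \<noteq> 0"
      using nz by blast
    then have "0 < ratio i0"
      using pos unfolding ratio_def by simp
    then show ?thesis
      using i(2) i0(1) unfolding t_def by (meson less_le_trans)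
  qed
  have "y i > 0"
    using i(1) pos by blast
  then have "cmod (x i) = t * y i"
    unfolding t_def ratio_def by simp
  then have "cmod lam * (t * y i) ^ (r - 1) = cmod (adj_action H x i)"
    using eig i(1) by (simp add: norm_mult norm_power)
  also have "\<dots> \<le> t ^ (r - 1) * adj_action H y i"
    using bound \<open>t > 0\<close> by (intro norm_adj_action_le[OF H]) auto
  also have "\<dots> \<le> t ^ (r - 1) * (\<rho> * y i ^ (r - 1))"
    using sub i \<open>t > 0\<close> by (intro mult_left_mono) auto
  also have "\<dots> = \<rho> * (t * y i) ^ (r - 1)"
    by (simp add: power_mult_distrib)
  finally show ?thesis
    using \<open>t > 0\<close> pos i by simp
qed

lemma tensor_eigenvalue_of_real:
  fixes y :: "'a \<Rightarrow> real"
  assumes "uniform_hg r H" "r \<ge> 1" "\<exists>v\<in>hverts H. y v \<noteq> 0"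
    and "\<forall>v\<in>hverts H. adj_action H y v = \<rho> * y v ^ (r - 1)"
  shows "tensor_eigenvalue r H (of_real \<rho>)"
  unfolding tensor_eigenvalue_iff[OF assms(1,2)]
proof (intro exI[of _ "\<lambda>u. of_real (y u)"] conjI)
  have "adj_action H (\<lambda>u. complex_of_real (y u)) v = of_real (adj_action H y v)" for v
    by (simp add: adj_action_def)
  then show "\<forall>i\<in>hverts H. adj_action H (\<lambda>u. complex_of_real (y u)) i = of_real \<rho> * of_real (y i) ^ (r - 1)"
    using assms(4) by simp
qed (use assms(3) in simp)

lemma spectral_radius_eqI:
  assumes "\<rho> \<ge> 0" "tensor_eigenvalue r H (of_real \<rho>)"
    and "\<And>lam. tensor_eigenvalue r H lam \<Longrightarrow> cmod lam \<le> \<rho>"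
  shows "spectral_radius r H = \<rho>"
  unfolding spectral_radius_def
proof (rule cSup_eq_maximum)
  show "\<rho> \<in> {cmod lam |lam. tensor_eigenvalue r H lam}"
    using assms(1,2) by (intro CollectI exI[of _ "of_real \<rho>"]) simp
qed (use assms(3) in auto)

lemma adj_action_eq_divide:
  fixes y :: "'a \<Rightarrow> 'b::field"
  assumes "\<forall>e\<in>hedges H. finite e" "y v \<noteq> 0"
  shows "adj_action H y v = (\<Sum>e\<in>{e \<in> hedges H. v \<in> e}. \<Prod>u\<in>e. y u) / y v"
  unfolding adj_action_def sum_divide_distrib
proof (intro sum.cong refl)
  fix e assume "e \<in> {e \<in> hedges H. v \<in> e}"
  then have "(\<Prod>u\<in>e. y u) = y v * (\<Prod>u\<in>e - {v}. y u)"
    using assms(1) by (intro prod.remove) auto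
  then show "(\<Prod>u\<in>e - {v}. y u) = (\<Prod>u\<in>e. y u) / y v"
    using assms(2) by simp
qed

lemma adj_action_zero:
  assumes "uniform_hg r H" "r \<ge> 2"
  shows "adj_action H (\<lambda>_. 0 :: 'b::comm_semiring_1) v = 0"
  unfolding adj_action_def
proof (intro sum.neutral ballI)
  fix e assume "e \<in> {e \<in> hedges H. v \<in> e}"
  then have "card (e - {v}) = r - 1"
    using uniform_hg_card_remove[OF assms(1)] by blast
  moreover have "r - 1 > 0"
    using assms(2) by simp
  ultimately show "(\<Prod>u\<in>e - {v}. 0 :: 'b) = 0"
    by (simp add: zero_power)
qed

lemma uniform_hg_union:
  assumes "uniform_hg r H" "uniform_hg r K"
  shows "uniform_hg r (hg_union H K)"
  using assms unfolding uniform_hg_def hverts_hg_union hedges_hg_union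
  by (auto simp: card_image) blast+

lemma sum_prod_image_edges:
  assumes "inj f"
  shows "(\<Sum>e\<in>(`) f ` A. \<Prod>u\<in>e - {f v}. x u) = (\<Sum>e\<in>A. \<Prod>u\<in>e - {v}. x (f u))"
proof -
  have "inj_on ((`) f) A"
    by (rule inj_onI) (simp add: inj_image_eq_iff[OF assms])
  moreover have "f ` e - {f v} = f ` (e - {v})" for e
    by (simp add: image_set_diff[OF assms])
  ultimately show ?thesis
    using assms by (simp add: sum.reindex prod.reindex inj_on_subset)
qed

lemma adj_action_hg_union_Inl:
  "adj_action (hg_union H K) x (Inl v) = adj_action H (x \<circ> Inl) v"
proof -
  have "{e \<in> hedges (hg_union H K). Inl v \<in> e} = (`) Inl ` {e \<in> hedges H. v \<in> e}"
    unfolding hedges_hg_union by auto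
  then show ?thesis
    unfolding adj_action_def by (simp add: sum_prod_image_edges)
qed

lemma adj_action_hg_union_Inr:
  "adj_action (hg_union H K) x (Inr v) = adj_action K (x \<circ> Inr) v"
proof -
  have "{e \<in> hedges (hg_union H K). Inr v \<in> e} = (`) Inr ` {e \<in> hedges K. v \<in> e}"
    unfolding hedges_hg_union by auto
  then show ?thesis
    unfolding adj_action_def by (simp add: sum_prod_image_edges)
qed

(* yK extended by zero is an eigenvector of the union, because every edge of H has a second vertex. *)
lemma spectral_radius_hg_union_eqI:
  fixes yH :: "'a \<Rightarrow> real" and yK :: "'b \<Rightarrow> real"
  assumes H: "uniform_hg r H" and K: "uniform_hg r K" and r: "r \<ge> 2" and "\<rho> \<ge> 0"
    and posH: "\<forall>v\<in>hverts H. yH v > 0"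
    and subH: "\<forall>v\<in>hverts H. adj_action H yH v \<le> \<rho> * yH v ^ (r - 1)"
    and posK: "\<forall>v\<in>hverts K. yK v > 0"
    and eigK: "\<forall>v\<in>hverts K. adj_action K yK v = \<rho> * yK v ^ (r - 1)"
    and "hverts K \<noteq> {}"
  shows "spectral_radius r (hg_union H K) = \<rho>"
proof (rule spectral_radius_eqI)
  have HK: "uniform_hg r (hg_union H K)"
    by (rule uniform_hg_union[OF H K])
  have "r - 1 > 0"
    using r by simp
  show "tensor_eigenvalue r (hg_union H K) (of_real \<rho>)"
  proof (rule tensor_eigenvalue_of_real[OF HK, where y = "case_sum (\<lambda>_. 0) yK"])
    show "\<exists>v\<in>hverts (hg_union H K). case_sum (\<lambda>_. 0) yK v \<noteq> 0"
      using \<open>hverts K \<noteq> {}\<close> posK unfolding hverts_hg_union by force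
    show "\<forall>v\<in>hverts (hg_union H K).
        adj_action (hg_union H K) (case_sum (\<lambda>_. 0) yK) v = \<rho> * case_sum (\<lambda>_. 0) yK v ^ (r - 1)"
      using eigK adj_action_zero[OF H r] \<open>r - 1 > 0\<close>
      by (auto simp: hverts_hg_union adj_action_hg_union_Inl adj_action_hg_union_Inr comp_def zero_power)
  qed (use r in simp)
  show "cmod lam \<le> \<rho>" if "tensor_eigenvalue r (hg_union H K) lam" for lam
    by (rule tensor_eigenvalue_norm_le[OF HK _ _ _ that, where y = "case_sum yH yK"])
       (use r posH posK subH eigK in
         \<open>auto simp: hverts_hg_union adj_action_hg_union_Inl adj_action_hg_union_Inr comp_def\<close>)
qed fact

section \<open>Positive weights on the loose path and on W_N\<close>

lemma uniform_hg_loose_path: "r \<ge> 2 \<Longrightarrow> uniform_hg r (loose_path r a)"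
  unfolding uniform_hg_def hverts_loose_path hedges_loose_path by (auto simp: card_lp_edge)

lemma uniform_hg_W_hg: "r \<ge> 2 \<Longrightarrow> uniform_hg r (W_hg r N)"
  unfolding uniform_hg_def hverts_W_hg hedges_W_hg W_edges_eq
  by (auto simp: card_lp_edge card_pendant_edge)

(* Every edge has weight product 2^(2/r); vertices (x, 0) lie on at most two edges and have y^r = 2,
   all others lie on one edge and have y^r = 1. *)
definition path_weight :: "nat \<Rightarrow> nat \<times> nat \<Rightarrow> real" where
  "path_weight r v = (if snd v = 0 then root r 2 else 1)"

lemma path_weight_pos: "r \<ge> 1 \<Longrightarrow> path_weight r v > 0"
  by (simp add: path_weight_def)

lemma prod_path_weight_lp_edge: "(\<Prod>u\<in>lp_edge r i. path_weight r u) = root r 2 ^ 2"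
  unfolding lp_edge_eq by (simp add: path_weight_def image_iff prod.reindex inj_on_def power2_eq_square)

lemma card_loose_path_edges_at:
  "card {e \<in> hedges (loose_path r a). (x, j) \<in> e} \<le> (if j = 0 then 2 else 1)"
proof (cases "j = 0")
  case True
  have "{e \<in> hedges (loose_path r a). (x, j) \<in> e} \<subseteq> lp_edge r ` {x - 1, x}"
  proof
    fix e assume "e \<in> {e \<in> hedges (loose_path r a). (x, j) \<in> e}"
    then obtain i where e: "e = lp_edge r i" "(x, 0) \<in> lp_edge r i"
      unfolding hedges_loose_path True by auto
    then have "i \<in> {x - 1, x}"
      by (auto simp: mem_lp_edge)
    with e show "e \<in> lp_edge r ` {x - 1, x}"
      by blast
  qed
  then have "card {e \<in> hedges (loose_path r a). (x, j) \<in> e} \<le> card (lp_edge r ` {x - 1, x})"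
    by (intro card_mono) auto
  also have "\<dots> \<le> 2"
    using card_image_le[of "{x - 1, x}" "lp_edge r"] by (simp add: card_insert_if)
  finally show ?thesis
    using True by simp
next
  case False
  have "{e \<in> hedges (loose_path r a). (x, j) \<in> e} \<subseteq> {lp_edge r x}"
    using False unfolding hedges_loose_path by (auto simp: mem_lp_edge)
  then show ?thesis
    using False card_mono[of "{lp_edge r x}"] by simp
qed

lemma loose_path_adj_action_le:
  assumes r: "r \<ge> 2" and v: "v \<in> hverts (loose_path r a)"
  shows "adj_action (loose_path r a) (path_weight r) v \<le> root r 2 ^ 2 * path_weight r v ^ (r - 1)"
proof -
  let ?y = "path_weight r v" and ?S = "{e \<in> hedges (loose_path r a). v \<in> e}"
  have y: "?y > 0" "real (card ?S) \<le> ?y ^ r"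
    using r card_loose_path_edges_at[of r a "fst v" "snd v"] by (auto simp: path_weight_def)
  have "\<forall>e\<in>?S. (\<Prod>u\<in>e. path_weight r u) = root r 2 ^ 2"
    unfolding hedges_loose_path using prod_path_weight_lp_edge by auto
  then have "(\<Sum>e\<in>?S. \<Prod>u\<in>e. path_weight r u) = real (card ?S) * root r 2 ^ 2"
    by simp
  moreover have "adj_action (loose_path r a) (path_weight r) v = (\<Sum>e\<in>?S. \<Prod>u\<in>e. path_weight r u) / ?y"
    using y(1) by (intro adj_action_eq_divide) (auto simp: hedges_loose_path)
  ultimately have "adj_action (loose_path r a) (path_weight r) v = real (card ?S) * root r 2 ^ 2 / ?y"
    by simp
  also have "\<dots> \<le> ?y ^ r * root r 2 ^ 2 / ?y"
    using y by (intro divide_right_mono mult_right_mono) auto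
  also have "\<dots> = root r 2 ^ 2 * ?y ^ (r - 1)"
    using r y(1) power_diff[of ?y 1 r] by simp
  finally show ?thesis .
qed

lemma inverse_root_two_power:
  assumes "r \<ge> 2"
  shows "(1 / root r 2) ^ (r - 2) = root r 2 ^ 2 / 2"
proof -
  have "r = (r - 2) + 2"
    using assms by simp
  then have "root r 2 ^ (r - 2) * root r 2 ^ 2 = root r 2 ^ r"
    by (metis power_add)
  then have "root r 2 ^ (r - 2) * root r 2 ^ 2 = 2"
    using assms by simp
  moreover have "root r 2 ^ 2 > 0"
    using assms by simp
  ultimately have "root r 2 ^ (r - 2) = 2 / root r 2 ^ 2"
    by (simp add: eq_divide_eq)
  then show ?thesis
    by (simp add: power_one_over)
qed

(* A positive eigenvector of W_N for 2^(2/r): the four end edges (the first and last path edge and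
   the two pendent edges) have weight product 2^(2/r) / 2, the inner path edges 2^(2/r). *)
definition W_weight :: "nat \<Rightarrow> nat \<Rightarrow> nat \<times> nat \<Rightarrow> real" where
  "W_weight r N = (\<lambda>(x, j).
     if j = 0 then (if 2 \<le> x \<and> x \<le> N - 2 then root r 2 else 1 / root r 2)
     else (if 2 \<le> x \<and> x \<le> N - 3 then 1 else 1 / root r 2))"

lemma W_weight_pos: "r \<ge> 1 \<Longrightarrow> W_weight r N v > 0"
  unfolding W_weight_def by (auto split: prod.splits)

lemma prod_W_weight_lp_edge:
  assumes "r \<ge> 2" "N \<ge> 5" "i \<in> {1..N-2}"
  shows "(\<Prod>u\<in>lp_edge r i. W_weight r N u)
           = (if i = 1 \<or> i = N - 2 then root r 2 ^ 2 / 2 else root r 2 ^ 2)"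
proof -
  have "(\<Prod>u\<in>lp_edge r i. W_weight r N u)
      = W_weight r N (i, 0) * W_weight r N (Suc i, 0)
        * (if 2 \<le> i \<and> i \<le> N - 3 then 1 else 1 / root r 2) ^ (r - 2)"
    unfolding lp_edge_eq by (simp add: prod.reindex inj_on_def image_iff W_weight_def)
  then show ?thesis
    using assms inverse_root_two_power[OF assms(1)]
    by (auto simp: W_weight_def power2_eq_square)
qed

lemma prod_W_weight_pendant_edge:
  assumes "r \<ge> 2" "N \<ge> 5" "(v, c) = (2, 0) \<or> (v, c) = (N - 2, N)"
  shows "(\<Prod>u\<in>pendant_edge r v c. W_weight r N u) = root r 2 ^ 2 / 2"
proof -
  have "(\<Prod>u\<in>pendant_edge r v c. W_weight r N u) = root r 2 * (1 / root r 2) ^ (r - 1)"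
    using assms unfolding pendant_edge_def by (auto simp: prod.reindex inj_on_def image_iff W_weight_def)
  also have "\<dots> = (1 / root r 2) ^ (r - 2)"
  proof -
    have "r - 1 = Suc (r - 2)" "root r 2 > 0"
      using assms(1) by simp_all
    then show ?thesis
      by simp
  qed
  finally show ?thesis
    using inverse_root_two_power[OF assms(1)] by simp
qed

lemma W_weight_edge_sum_eq:
  assumes "r \<ge> 2" "N \<ge> 5"
  shows "(\<Sum>e\<in>{e \<in> W_edges r N. v \<in> e}. \<Prod>u\<in>e. W_weight r N u)
           = (\<Sum>i\<in>{i \<in> {1..N-2}. v \<in> lp_edge r i}.
                if i = 1 \<or> i = N - 2 then root r 2 ^ 2 / 2 else root r 2 ^ 2)
             + (if v \<in> pendant_edge r 2 0 then root r 2 ^ 2 / 2 else 0)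
             + (if v \<in> pendant_edge r (N - 2) N then root r 2 ^ 2 / 2 else 0)"
proof -
  let ?P = "pendant_edge r 2 0" and ?Q = "pendant_edge r (N - 2) N"
  let ?w = "\<lambda>e. \<Prod>u\<in>e. W_weight r N u"
  let ?I = "{i \<in> {1..N-2}. v \<in> lp_edge r i}"
  have notin: "?P \<notin> lp_edge r ` ?I" "?Q \<notin> lp_edge r ` ?I"
    using W_pendant_edges_distinct[OF assms(2,1)] by auto
  have "{e \<in> W_edges r N. v \<in> e} = lp_edge r ` ?I \<union> {e \<in> {?P, ?Q}. v \<in> e}"
    unfolding W_edges_eq by blast
  then have "(\<Sum>e\<in>{e \<in> W_edges r N. v \<in> e}. ?w e)
      = (\<Sum>e\<in>lp_edge r ` ?I \<union> {e \<in> {?P, ?Q}. v \<in> e}. ?w e)"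
    by (rule arg_cong)
  also have "\<dots> = (\<Sum>e\<in>lp_edge r ` ?I. ?w e) + (\<Sum>e\<in>{e \<in> {?P, ?Q}. v \<in> e}. ?w e)"
  proof (rule sum.union_disjoint)
    show "lp_edge r ` ?I \<inter> {e \<in> {?P, ?Q}. v \<in> e} = {}"
      using notin by blast
  qed simp_all
  also have "(\<Sum>e\<in>lp_edge r ` ?I. ?w e) = (\<Sum>i\<in>?I. ?w (lp_edge r i))"
    using inj_on_subset[OF inj_lp_edge subset_UNIV] by (simp add: sum.reindex)
  also have "\<dots> = (\<Sum>i\<in>?I. if i = 1 \<or> i = N - 2 then root r 2 ^ 2 / 2 else root r 2 ^ 2)"
    using assms by (intro sum.cong refl prod_W_weight_lp_edge) auto
  also have "(\<Sum>e\<in>{e \<in> {?P, ?Q}. v \<in> e}. ?w e)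
      = (if v \<in> ?P then root r 2 ^ 2 / 2 else 0) + (if v \<in> ?Q then root r 2 ^ 2 / 2 else 0)"
  proof -
    have "{e \<in> {?P, ?Q}. v \<in> e} = (if v \<in> ?P then {?P} else {}) \<union> (if v \<in> ?Q then {?Q} else {})"
      by auto
    moreover have "?w ?P = root r 2 ^ 2 / 2" "?w ?Q = root r 2 ^ 2 / 2"
      using assms by (simp_all add: prod_W_weight_pendant_edge)
    ultimately show ?thesis
      using W_pendant_edges_distinct(1)[OF assms(2,1)] by simp
  qed
  finally show ?thesis
    by (simp add: add.assoc)
qed

lemma W_weight_edge_sum_spine:
  assumes "r \<ge> 2" "N \<ge> 5" "1 \<le> x" "x \<le> N - 1"
  shows "(\<Sum>e\<in>{e \<in> W_edges r N. (x, 0) \<in> e}. \<Prod>u\<in>e. W_weight r N u)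
           = root r 2 ^ 2 * W_weight r N (x, 0) ^ r"
proof -
  let ?s = "root r 2"
  let ?I = "{i \<in> {x - 1, x}. 1 \<le> i \<and> i \<le> N - 2}"
  have s: "?s ^ r = 2" "(1 / ?s) ^ r = 1 / 2"
    using assms(1) by (simp_all add: power_one_over)
  have P: "(x, 0) \<in> pendant_edge r 2 0 \<longleftrightarrow> x = 2" "(x, 0) \<in> pendant_edge r (N - 2) N \<longleftrightarrow> x = N - 2"
    by (simp_all add: mem_pendant_edge)
  have I: "{i \<in> {1..N-2}. (x, 0) \<in> lp_edge r i} = ?I"
    using assms(3) by (auto simp: mem_lp_edge)
  have "(\<Sum>e\<in>{e \<in> W_edges r N. (x, 0) \<in> e}. \<Prod>u\<in>e. W_weight r N u)
      = (\<Sum>i\<in>?I. if i = 1 \<or> i = N - 2 then ?s ^ 2 / 2 else ?s ^ 2)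
        + (if x = 2 then ?s ^ 2 / 2 else 0) + (if x = N - 2 then ?s ^ 2 / 2 else 0)"
    unfolding W_weight_edge_sum_eq[OF assms(1,2)] I P ..
  also have "\<dots> = ?s ^ 2 * W_weight r N (x, 0) ^ r"
  proof -
    consider "x = 1" | "x = N - 1" | "2 \<le> x" "x \<le> N - 2"
      using assms by linarith
    then show ?thesis
    proof cases
      case 1
      then have "?I = {1}"
        using assms(2) by auto
      then show ?thesis
        using 1 assms s by (simp add: W_weight_def)
    next
      case 2
      then have "?I = {N - 2}"
        using assms(2) by auto
      moreover have "\<not> (2 \<le> x \<and> x \<le> N - 2)" "x \<noteq> 2" "x \<noteq> N - 2" "N - 2 \<noteq> 1"
        using 2 assms(2) by auto
      ultimately show ?thesis
        using s by (simp add: W_weight_def) blast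
    next
      case 3
      then have "?I = {x - 1, x}"
        by auto
      moreover have "x - 1 \<noteq> x" "x - 1 \<noteq> N - 2" "x \<noteq> 1" "x - 1 = 1 \<longleftrightarrow> x = 2"
        using 3 by auto
      ultimately show ?thesis
        using 3 s by (simp add: W_weight_def)
    qed
  qed
  finally show ?thesis .
qed

lemma W_weight_edge_sum_off_spine:
  assumes "r \<ge> 2" "N \<ge> 5" "j \<ge> 1" "(x, j) \<in> hverts (W_hg r N)"
  shows "(\<Sum>e\<in>{e \<in> W_edges r N. (x, j) \<in> e}. \<Prod>u\<in>e. W_weight r N u)
           = root r 2 ^ 2 * W_weight r N (x, j) ^ r"
proof -
  let ?s = "root r 2"
  have s: "(1 / ?s) ^ r = 1 / 2"
    using assms(1) by (simp add: power_one_over)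
  have "N \<ge> 4" "N - 2 \<ge> 1"
    using assms(2) by auto
  then have "(x, j) \<in> ({1..Suc (N - 2)} \<times> {0} \<union> {1..N-2} \<times> {1..r-2}) \<union> {0, N} \<times> {1..r-1}"
    using assms(4) by (simp add: hverts_W_hg_eq hverts_loose_path_eq)
  then have v: "1 \<le> x \<and> x \<le> N - 2 \<and> j \<le> r - 2 \<or> (x = 0 \<or> x = N) \<and> j \<le> r - 1"
    using assms(3) by auto
  have P: "(x, j) \<in> pendant_edge r 2 0 \<longleftrightarrow> x = 0 \<and> j \<le> r - 1"
      "(x, j) \<in> pendant_edge r (N - 2) N \<longleftrightarrow> x = N \<and> j \<le> r - 1"
    using assms(3) by (auto simp: mem_pendant_edge)
  have I: "{i \<in> {1..N-2}. (x, j) \<in> lp_edge r i} = (if 1 \<le> x \<and> x \<le> N - 2 then {x} else {})"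
    using assms(3) v by (auto simp: mem_lp_edge)
  show ?thesis
    unfolding W_weight_edge_sum_eq[OF assms(1,2)] I P
    using v assms(2,3) s by (auto simp: W_weight_def)
qed

lemma W_hg_adj_action_eq:
  assumes "r \<ge> 2" "N \<ge> 5" "v \<in> hverts (W_hg r N)"
  shows "adj_action (W_hg r N) (W_weight r N) v = root r 2 ^ 2 * W_weight r N v ^ (r - 1)"
proof -
  obtain x j where v: "v = (x, j)"
    by (cases v)
  have "(\<Sum>e\<in>{e \<in> W_edges r N. v \<in> e}. \<Prod>u\<in>e. W_weight r N u) = root r 2 ^ 2 * W_weight r N v ^ r"
  proof (cases "j = 0")
    case True
    then have "1 \<le> x" "x \<le> N - 1"
      using assms unfolding v by (auto simp: hverts_W_hg_eq hverts_loose_path_eq)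
    then show ?thesis
      unfolding v True by (rule W_weight_edge_sum_spine[OF assms(1,2)])
  next
    case False
    then show ?thesis
      using assms unfolding v by (intro W_weight_edge_sum_off_spine) auto
  qed
  moreover have pos: "W_weight r N v > 0"
    using assms(1) by (simp add: W_weight_pos)
  moreover have "W_weight r N v ^ (r - 1) = W_weight r N v ^ r / W_weight r N v"
    using power_diff[of "W_weight r N v" 1 r] assms(1) pos by simp
  ultimately show ?thesis
    using uniform_hg_W_hg[OF assms(1)]
    by (simp add: adj_action_eq_divide hedges_W_hg W_edges_eq)
qed

lemma spectral_radius_loose_path_W_hg:
  assumes "r \<ge> 2" "N \<ge> 5"
  shows "spectral_radius r (hg_union (loose_path r a) (W_hg r N)) = root r 2 ^ 2"
proof (rule spectral_radius_hg_union_eqI[where yH = "path_weight r" and yK = "W_weight r N"])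
  have "(1, 0) \<in> lp_edge r 1" "lp_edge r 1 \<in> W_edges r N"
    using assms(2) by (auto simp: mem_lp_edge W_edges_eq)
  then show "hverts (W_hg r N) \<noteq> {}"
    unfolding hverts_W_hg by blast
  show "\<forall>v\<in>hverts (loose_path r a).
      adj_action (loose_path r a) (path_weight r) v \<le> root r 2 ^ 2 * path_weight r v ^ (r - 1)"
    using loose_path_adj_action_le[OF assms(1)] by blast
qed (use assms in \<open>auto simp: uniform_hg_loose_path uniform_hg_W_hg path_weight_pos W_weight_pos
       W_hg_adj_action_eq\<close>)

lemma matching_gen_poly_loose_path_W_hg:
  assumes "r \<ge> 2" "N \<ge> 5"
  shows "matching_gen_poly (hedges (hg_union (loose_path r a) (W_hg r N)))
           = path_matching_poly (Suc a) * ([:1, 4:] * path_matching_poly (N - 3))"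
proof -
  have "{} \<notin> hedges (loose_path r a)"
    by (auto simp: hedges_loose_path lp_edge_eq)
  then have "matching_gen_poly (hedges (hg_union (loose_path r a) (W_hg r N)))
      = matching_gen_poly (hedges (loose_path r a)) * matching_gen_poly (hedges (W_hg r N))"
    using uniform_hg_finite_hedges[OF uniform_hg_W_hg[OF assms(1)]]
    by (intro matching_gen_poly_hg_union) (simp_all add: hedges_loose_path)
  then show ?thesis
    using assms by (simp add: matching_gen_poly_loose_path hedges_W_hg matching_gen_poly_W_edges)
qed

lemma card_hverts_loose_path_W_hg:
  assumes "a \<ge> 1" "r \<ge> 2" "N \<ge> 5"
  shows "card (hverts (hg_union (loose_path r a) (W_hg r N))) = (a + N) * (r - 1) + 2"
proof -
  have "card (hverts (hg_union (loose_path r a) (W_hg r N)))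
      = card (hverts (loose_path r a)) + card (hverts (W_hg r N))"
    using uniform_hg_loose_path[of r a] uniform_hg_W_hg[of r N] assms(2)
    by (intro card_hverts_hg_union) (simp_all add: uniform_hg_def)
  then show ?thesis
    using assms by (simp add: card_hverts_loose_path card_hverts_W_hg add_mult_distrib)
qed

lemma matching_energy_loose_path_W_hg_swap:
  assumes "r \<ge> 2" "N \<ge> 5" "M \<ge> 5"
  shows "matching_energy r (hg_union (loose_path r (M - 4)) (W_hg r N))
           = matching_energy r (hg_union (loose_path r (N - 4)) (W_hg r M))"
proof -
  let ?U1 = "hg_union (loose_path r (M - 4)) (W_hg r N)"
  let ?U2 = "hg_union (loose_path r (N - 4)) (W_hg r M)"
  have finite_hedges: "finite (hedges (hg_union (loose_path r a) (W_hg r K)))" for a K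
    using uniform_hg_union[OF uniform_hg_loose_path uniform_hg_W_hg] assms(1)
    by (intro uniform_hg_finite_hedges)
  have "card (hverts ?U1) = card (hverts ?U2)"
    using assms by (simp add: card_hverts_loose_path_W_hg)
  moreover have "Suc (M - 4) = M - 3" "Suc (N - 4) = N - 3"
    using assms(2,3) by auto
  then have "matching_gen_poly (hedges ?U1) = matching_gen_poly (hedges ?U2)"
    using assms by (simp only: matching_gen_poly_loose_path_W_hg ac_simps)
  ultimately show ?thesis
    by (rule matching_energy_eqI[OF finite_hedges finite_hedges])
qed

theorem theorem8:
  fixes m n r :: nat
  assumes "m \<ge> 6" and "n \<ge> 6" and "r \<ge> 3"
  shows "spectral_radius r (hg_union (loose_path r (m - 5)) (W_hg r (n - 1)))
           = spectral_radius r (hg_union (loose_path r (n - 5)) (W_hg r (m - 1)))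
       \<and> matching_energy r (hg_union (loose_path r (m - 5)) (W_hg r (n - 1)))
           = matching_energy r (hg_union (loose_path r (n - 5)) (W_hg r (m - 1)))"
proof
  show "spectral_radius r (hg_union (loose_path r (m - 5)) (W_hg r (n - 1)))
      = spectral_radius r (hg_union (loose_path r (n - 5)) (W_hg r (m - 1)))"
    using assms by (simp add: spectral_radius_loose_path_W_hg)
  show "matching_energy r (hg_union (loose_path r (m - 5)) (W_hg r (n - 1)))
      = matching_energy r (hg_union (loose_path r (n - 5)) (W_hg r (m - 1)))"
    using matching_energy_loose_path_W_hg_swap[of r "n - 1" "m - 1"] assms by simp
qed

end
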